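(* For any graph $G$ and integers $k\ge 2$, $r\ge 3$, $R_r(\mathcal{B}(G),k)\le R(G,k)+r-2$, where $R(G,k)$ is the classical $k$-color Ramsey number of $G$.
   Context: For a graph $G$, a hypergraph $H$ is a Berge-$G$ hypergraph if there are an injective map $\phi:V(G)\to V(H)$ and pairwise distinct hyperedges $e_{xy}\in E(H)$, one for each $xy\in E(G)$, with $\phi(x),\phi(y)\in e_{xy}$. $\mathcal{B}(G)$ denotes the family of all Berge-$G$ hypergraphs. For a family $\mathcal{H}$ of $r$-uniform hypergraphs, $R_r(\mathcal{H},k)$ is the smallest $n$ such that every $k$-coloring of the hyperedges of the complete $r$-uniform hypergraph $K_n^r$ contains a monochromatic subhypergraph belonging to $\mathcal{H}$. $R(G,k)$ is the smallest $n$ such that every $k$-coloring of the edges of $K_n$ contains a monochromatic copy of $G$. *)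

theory Defs
  imports Main
begin

definition graph :: "'a set \<Rightarrow> 'a set set \<Rightarrow> bool" where
  "graph V E \<longleftrightarrow> finite V \<and> (\<forall>e\<in>E. e \<subseteq> V \<and> card e = 2)"

definition berge :: "'a set \<Rightarrow> 'a set set \<Rightarrow> 'b set \<Rightarrow> 'b set set \<Rightarrow> bool" where
  "berge V E HV HE \<longleftrightarrow>
     (\<exists>\<phi> f. inj_on \<phi> V \<and> \<phi> ` V \<subseteq> HV \<and> inj_on f E \<and> f ` E \<subseteq> HE \<and>
            (\<forall>e\<in>E. \<phi> ` e \<subseteq> f e))"

definition graph_ramsey :: "'a set \<Rightarrow> 'a set set \<Rightarrow> nat \<Rightarrow> nat" where
  "graph_ramsey V E k = (LEAST n::nat.
     \<forall>c :: nat set \<Rightarrow> nat.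
       (\<forall>e. e \<subseteq> {0..<n} \<and> card e = 2 \<longrightarrow> c e < k) \<longrightarrow>
       (\<exists>i<k. \<exists>\<phi>. inj_on \<phi> V \<and> \<phi> ` V \<subseteq> {0..<n} \<and> (\<forall>e\<in>E. c (\<phi> ` e) = i)))"

definition berge_ramsey :: "nat \<Rightarrow> 'a set \<Rightarrow> 'a set set \<Rightarrow> nat \<Rightarrow> nat" where
  "berge_ramsey r V E k = (LEAST n::nat.
     \<forall>c :: nat set \<Rightarrow> nat.
       (\<forall>e. e \<subseteq> {0..<n} \<and> card e = r \<longrightarrow> c e < k) \<longrightarrow>
       (\<exists>i<k. \<exists>HV HE. HV \<subseteq> {0..<n} \<and>
            HE \<subseteq> {e. e \<subseteq> HV \<and> card e = r \<and> c e = i} \<and> berge V E HV HE))"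

end

theory Submission
  imports Defs "HOL-Library.Ramsey"
begin

text \<open>Pad every pair of the first \<open>R(G,k)\<close> vertices by a fixed set \<open>B\<close> of \<open>r - 2\<close> further
  vertices. A \<open>k\<close>-colouring of the \<open>r\<close>-sets then induces a \<open>k\<close>-colouring of the pairs, which
  contains a monochromatic copy of \<open>G\<close>; padding its edges by \<open>B\<close> yields distinct hyperedges of
  one colour, i.e. a monochromatic Berge-\<open>G\<close> hypergraph.\<close>

definition arrows :: "'a set \<Rightarrow> 'a set set \<Rightarrow> nat \<Rightarrow> nat \<Rightarrow> bool" where
  "arrows V E k n \<longleftrightarrow> (\<forall>c :: nat set \<Rightarrow> nat.
     (\<forall>e. e \<subseteq> {0..<n} \<and> card e = 2 \<longrightarrow> c e < k) \<longrightarrow>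
     (\<exists>i<k. \<exists>\<phi>. inj_on \<phi> V \<and> \<phi> ` V \<subseteq> {0..<n} \<and> (\<forall>e\<in>E. c (\<phi> ` e) = i)))"

definition berge_arrows :: "nat \<Rightarrow> 'a set \<Rightarrow> 'a set set \<Rightarrow> nat \<Rightarrow> nat \<Rightarrow> bool" where
  "berge_arrows r V E k n \<longleftrightarrow> (\<forall>c :: nat set \<Rightarrow> nat.
     (\<forall>e. e \<subseteq> {0..<n} \<and> card e = r \<longrightarrow> c e < k) \<longrightarrow>
     (\<exists>i<k. \<exists>HV HE. HV \<subseteq> {0..<n} \<and>
        HE \<subseteq> {e. e \<subseteq> HV \<and> card e = r \<and> c e = i} \<and> berge V E HV HE))"

lemma graph_ramsey_eq_Least: "graph_ramsey V E k = (LEAST n. arrows V E k n)"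
  unfolding graph_ramsey_def arrows_def ..

lemma berge_ramsey_eq_Least: "berge_ramsey r V E k = (LEAST n. berge_arrows r V E k n)"
  unfolding berge_ramsey_def berge_arrows_def ..

lemma graph_edge_card_image:
  assumes "graph V E" "e \<in> E" "inj_on \<phi> V"
  shows "card (\<phi> ` e) = 2"
proof -
  have "e \<subseteq> V" "card e = 2" using assms(1,2) by (auto simp: graph_def)
  then show ?thesis using assms(3) by (metis card_image inj_on_subset)
qed

lemma arrows_exists:
  assumes "graph V E"
  shows "\<exists>n. arrows V E k n"
proof -
  have "finite V" using assms by (simp add: graph_def)
  obtain N :: nat where N: "partn_lst {..<N} (replicate k (card V)) 2"
    using ramsey_full by blast
  have "arrows V E k N"
    unfolding arrows_def
  proof (intro allI impI)
    fix c :: "nat set \<Rightarrow> nat"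
    assume "\<forall>e. e \<subseteq> {0..<N} \<and> card e = 2 \<longrightarrow> c e < k"
    then have "c \<in> nsets {..<N} 2 \<rightarrow> {..<k}"
      by (auto simp: nsets_def atLeast0LessThan)
    then obtain i H where "i < k" and H: "H \<in> nsets {..<N} (card V)"
      and mono: "c ` nsets H 2 \<subseteq> {i}"
      using partn_lstE[OF N] by (metis length_replicate nth_replicate)
    then have "H \<subseteq> {0..<N}" "finite H" "card H = card V"
      by (auto simp: nsets_def)
    then obtain \<phi> where \<phi>: "bij_betw \<phi> V H"
      using finite_same_card_bij[OF \<open>finite V\<close>] by metis
    have "c (\<phi> ` e) = i" if "e \<in> E" for e
    proof -
      have "\<phi> ` e \<subseteq> H" using that assms \<phi> by (auto simp: graph_def bij_betw_def)
      moreover have "card (\<phi> ` e) = 2"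
        using graph_edge_card_image[OF assms that, of \<phi>] \<phi> by (simp add: bij_betw_def)
      ultimately have "\<phi> ` e \<in> nsets H 2"
        using \<open>finite H\<close> by (auto simp: nsets_def intro: finite_subset)
      with mono show ?thesis by blast
    qed
    then show "\<exists>i<k. \<exists>\<phi>. inj_on \<phi> V \<and> \<phi> ` V \<subseteq> {0..<N} \<and> (\<forall>e\<in>E. c (\<phi> ` e) = i)"
      using \<open>i < k\<close> \<phi> \<open>H \<subseteq> {0..<N}\<close> by (auto simp: bij_betw_def)
  qed
  then show ?thesis ..
qed

lemma arrows_graph_ramsey:
  assumes "graph V E"
  shows "arrows V E k (graph_ramsey V E k)"
  unfolding graph_ramsey_eq_Least using arrows_exists[OF assms] by (rule LeastI_ex)

lemma berge_ramsey_le: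
  assumes "berge_arrows r V E k n"
  shows "berge_ramsey r V E k \<le> n"
  unfolding berge_ramsey_eq_Least using assms by (rule Least_le)

lemma inj_on_Un_disjoint:
  assumes "\<And>X. X \<in> S \<Longrightarrow> X \<inter> B = {}"
  shows "inj_on (\<lambda>X. X \<union> B) S"
proof (rule inj_onI)
  fix X Y assume "X \<in> S" "Y \<in> S" "X \<union> B = Y \<union> B"
  then have "(X \<union> B) - B = (Y \<union> B) - B" by simp
  with assms[OF \<open>X \<in> S\<close>] assms[OF \<open>Y \<in> S\<close>] show "X = Y" by blast
qed

lemma berge_padded_copy:
  assumes "graph V E" "inj_on \<phi> V" "\<phi> ` V \<subseteq> A" "A \<inter> B = {}"
  shows "berge V E (A \<union> B) ((\<lambda>e. \<phi> ` e \<union> B) ` E)"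
proof -
  have E_sub: "e \<subseteq> V" if "e \<in> E" for e using assms(1) that by (simp add: graph_def)
  have "inj_on (image \<phi>) E"
  proof (rule inj_onI)
    fix x y assume "x \<in> E" "y \<in> E" "\<phi> ` x = \<phi> ` y"
    then show "x = y" using inj_on_image_eq_iff[OF assms(2)] E_sub by blast
  qed
  moreover have "inj_on (\<lambda>X. X \<union> B) (image \<phi> ` E)"
  proof (rule inj_on_Un_disjoint)
    fix X assume "X \<in> image \<phi> ` E"
    then have "X \<subseteq> A" using assms(3) E_sub by blast
    then show "X \<inter> B = {}" using assms(4) by blast
  qed
  ultimately have "inj_on (\<lambda>e. \<phi> ` e \<union> B) E"
    using comp_inj_on by (fastforce simp: comp_def)
  then show ?thesis
    unfolding berge_def using assms(2,3)
    by (intro exI[of _ \<phi>] exI[of _ "\<lambda>e. \<phi> ` e \<union> B"]) blast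
qed

theorem arrows_imp_berge_arrows:
  assumes G: "graph V E" and "r \<ge> 2" and N: "arrows V E k N"
  shows "berge_arrows r V E k (N + r - 2)"
  unfolding berge_arrows_def
proof (intro allI impI)
  fix c :: "nat set \<Rightarrow> nat"
  assume c: "\<forall>e. e \<subseteq> {0..<N + r - 2} \<and> card e = r \<longrightarrow> c e < k"
  define B where "B = {N..<N + r - 2}"
  have padded: "e \<union> B \<subseteq> {0..<N + r - 2} \<and> card (e \<union> B) = r"
    if "e \<subseteq> {0..<N}" "card e = 2" for e
  proof -
    have "finite e" "e \<inter> B = {}" using that(1) by (auto simp: B_def intro: finite_subset)
    then have "card (e \<union> B) = 2 + (r - 2)" using that(2) by (simp add: card_Un_disjoint B_def)
    then show ?thesis using that(1) \<open>r \<ge> 2\<close> by (auto simp: B_def)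
  qed
  then have "\<forall>e. e \<subseteq> {0..<N} \<and> card e = 2 \<longrightarrow> c (e \<union> B) < k"
    using c by blast
  with N obtain i \<phi> where "i < k" and \<phi>: "inj_on \<phi> V" "\<phi> ` V \<subseteq> {0..<N}"
    and mono: "\<forall>e\<in>E. c (\<phi> ` e \<union> B) = i"
    unfolding arrows_def by (elim allE[of _ "\<lambda>e. c (e \<union> B)"] impE exE conjE) auto
  have "{0..<N} \<inter> B = {}" "{0..<N} \<union> B = {0..<N + r - 2}" using \<open>r \<ge> 2\<close> by (auto simp: B_def)
  then have berge: "berge V E {0..<N + r - 2} ((\<lambda>e. \<phi> ` e \<union> B) ` E)"
    using berge_padded_copy[OF G \<phi>] by metis
  have "\<phi> ` e \<union> B \<subseteq> {0..<N + r - 2} \<and> card (\<phi> ` e \<union> B) = r \<and> c (\<phi> ` e \<union> B) = i"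
    if "e \<in> E" for e
  proof -
    have "\<phi> ` e \<subseteq> {0..<N}" using G that \<phi>(2) by (auto simp: graph_def)
    with padded graph_edge_card_image[OF G that \<phi>(1)] mono that show ?thesis by blast
  qed
  then have "(\<lambda>e. \<phi> ` e \<union> B) ` E \<subseteq> {X. X \<subseteq> {0..<N + r - 2} \<and> card X = r \<and> c X = i}"
    by blast
  with berge \<open>i < k\<close> show "\<exists>i<k. \<exists>HV HE. HV \<subseteq> {0..<N + r - 2} \<and>
      HE \<subseteq> {e. e \<subseteq> HV \<and> card e = r \<and> c e = i} \<and> berge V E HV HE"
    by blast
qed

theorem corollary1:
  fixes V :: "'a set" and E :: "'a set set" and k r :: nat
  assumes "graph V E" and "k \<ge> 2" and "r \<ge> 3"
  shows "berge_ramsey r V E k \<le> graph_ramsey V E k + r - 2"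
proof (rule berge_ramsey_le)
  show "berge_arrows r V E k (graph_ramsey V E k + r - 2)"
    using arrows_imp_berge_arrows[OF assms(1) _ arrows_graph_ramsey[OF assms(1)]] assms(3) by simp
qed

end
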